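(* Let $I\subset\mathbb{R}$ be an open interval and let $\alpha:I\to\mathbb{R}$ be a smooth function with $\alpha>0$ and $\alpha'\neq 0$ on $I$. Consider the rotational surface $M$ in $(\mathbb{R}^3,\|\cdot\|)$ parametrized by $f(u,v)=(\alpha(u)\cos v,\ \alpha(u)\sin v,\ u)$, $u\in I$. Then $M$ is flat (i.e. its Minkowski Gaussian curvature $K$ vanishes identically) if and only if $\alpha(u)=au+b$ on $I$ for constants $a\neq 0$ and $b$, i.e. $M$ is (part of) a circular cone with axis the $x_3$-axis.
   Context: Fix an integer $m\ge 2$. Let $\Phi(x_1,x_2,x_3)=(x_1^2+x_2^2)^m+x_3^{2m}$ and let $\|\cdot\|$ be the norm on $\mathbb{R}^3$ whose unit sphere is $S=\{x\in\mathbb{R}^3:\Phi(x)=1\}$ (a smooth, strictly convex surface). For a real number $t$ and an integer $k$, $t^{k/(2m-1)}$ means $(t^{1/(2m-1)})^k$ with the real odd root. For a surface given by a parametrization $f(s,v)$, its Birkhoff–Gauss map $\eta$ is the map into $S$ defined by requiring $\eta\in S$ and $\nabla\Phi(\eta)=\mu\, f_s\times f_v$ for some function $\mu>0$, where $\times$ is the standard cross product (so the tangent plane of $S$ at $\eta(p)$ is parallel to $T_pM$, and $d\eta_p$ is an endomorphism of $T_pM$). The Minkowski Gaussian curvature is $K=\det(d\eta_p)$ and the Minkowski mean curvature is $H=\tfrac12\operatorname{trace}(d\eta_p)$. The surface is flat if $K\equiv 0$ and minimal if $H\equiv 0$. *)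

theory Defs
  imports "HOL-Analysis.Analysis"
begin

definition smooth_on :: "real set \<Rightarrow> (real \<Rightarrow> real) \<Rightarrow> bool" where
  "smooth_on I g \<longleftrightarrow> (\<exists>D :: nat \<Rightarrow> real \<Rightarrow> real. D 0 = g \<and>
      (\<forall>n. \<forall>x\<in>I. (D n has_real_derivative D (Suc n) x) (at x)))"

definition Phi :: "nat \<Rightarrow> real^3 \<Rightarrow> real" where
  "Phi m x = ((x$1)^2 + (x$2)^2)^m + (x$3)^(2*m)"

definition gradPhi :: "nat \<Rightarrow> real^3 \<Rightarrow> real^3" where
  "gradPhi m x = vector
     [2 * real m * x$1 * ((x$1)^2 + (x$2)^2)^(m - 1),
      2 * real m * x$2 * ((x$1)^2 + (x$2)^2)^(m - 1),
      2 * real m * (x$3)^(2*m - 1)]"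

definition partial_s :: "(real \<times> real \<Rightarrow> real^3) \<Rightarrow> real \<times> real \<Rightarrow> real^3" where
  "partial_s F p = vector_derivative (\<lambda>s. F (s, snd p)) (at (fst p))"

definition partial_v :: "(real \<times> real \<Rightarrow> real^3) \<Rightarrow> real \<times> real \<Rightarrow> real^3" where
  "partial_v F p = vector_derivative (\<lambda>v. F (fst p, v)) (at (snd p))"

definition BG_map :: "nat \<Rightarrow> (real \<times> real \<Rightarrow> real^3) \<Rightarrow> real \<times> real \<Rightarrow> real^3" where
  "BG_map m f p = (THE e. Phi m e = 1 \<and>
      (\<exists>\<mu>>0. gradPhi m e = \<mu> *\<^sub>R cross3 (partial_s f p) (partial_v f p)))"

text \<open>Minkowski Gaussian curvature K = det(d eta_p), where d eta_p is the endomorphism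
  of T_pM with matrix [[a,b],[c,d]] in the basis f_s, f_v:
  eta_s = a f_s + c f_v and eta_v = b f_s + d f_v.\<close>
definition mink_gauss_curv :: "nat \<Rightarrow> (real \<times> real \<Rightarrow> real^3) \<Rightarrow> real \<times> real \<Rightarrow> real" where
  "mink_gauss_curv m f p = (THE k. \<exists>a b c d.
      partial_s (BG_map m f) p = a *\<^sub>R partial_s f p + c *\<^sub>R partial_v f p \<and>
      partial_v (BG_map m f) p = b *\<^sub>R partial_s f p + d *\<^sub>R partial_v f p \<and>
      k = a * d - b * c)"

definition rot_surface :: "(real \<Rightarrow> real) \<Rightarrow> real \<times> real \<Rightarrow> real^3" where
  "rot_surface \<alpha> p = vector [\<alpha> (fst p) * cos (snd p), \<alpha> (fst p) * sin (snd p), fst p]"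

end

theory Submission
  imports Defs
begin

text \<open>
  The Euclidean normal of the surface is alpha(u) (-cos v, -sin v, alpha'(u)). Since Phi is
  homogeneous of degree 2m, its gradient keeps its direction along rays, and on the ray through
  (-cos v, -sin v, z) it points along (-cos v, -sin v, z^(2m-1)). Hence the Birkhoff--Gauss map
  is the radial projection onto S of (-cos v, -sin v, w(u)) with w = alpha'^(1/(2m-1)), which is
  differentiable because alpha' never vanishes. Both coordinate directions are eigenvectors of
  its differential: eta_v = -c2 f_v and eta_s = c1 alpha'' f_s with c1, c2 > 0. So
  K = -c1 c2 alpha'' vanishes exactly where alpha'' does, and alpha'' = 0 on an interval means
  that alpha is affine.
\<close>

lemma has_vector_derivative_vector3:
  assumes "(f1 has_real_derivative a) (at x)" "(f2 has_real_derivative b) (at x)"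
    "(f3 has_real_derivative c) (at x)"
  shows "((\<lambda>t. vector [f1 t, f2 t, f3 t] :: real^3) has_vector_derivative vector [a, b, c]) (at x)"
proof -
  define e1 e2 e3 :: "real^3" where "e1 = vector [1, 0, 0]" and "e2 = vector [0, 1, 0]"
    and "e3 = vector [0, 0, 1]"
  have decomp: "vector [x1, x2, x3] = x1 *\<^sub>R e1 + x2 *\<^sub>R e2 + x3 *\<^sub>R e3" for x1 x2 x3 :: real
    by (simp add: e1_def e2_def e3_def vec_eq_iff forall_3)
  show ?thesis
    unfolding decomp by (auto intro!: derivative_eq_intros assms)
qed

lemma cross3_ne_0_imp_coeffs_unique:
  assumes "cross3 x y \<noteq> 0" and "a *\<^sub>R x + c *\<^sub>R y = a' *\<^sub>R x + c' *\<^sub>R y"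
  shows "a = a'" and "c = c'"
proof -
  have eq: "(a - a') *\<^sub>R x = (c' - c) *\<^sub>R y"
    using assms(2) by (simp add: algebra_simps)
  have "(a - a') *\<^sub>R cross3 x y = cross3 ((c' - c) *\<^sub>R y) y"
    by (simp only: cross_mult_left flip: eq)
  moreover have "(c' - c) *\<^sub>R cross3 x y = cross3 x ((a - a') *\<^sub>R x)"
    by (simp only: cross_mult_right eq)
  ultimately have "(a - a') *\<^sub>R cross3 x y = 0" and "(c' - c) *\<^sub>R cross3 x y = 0"
    by (simp_all add: cross_mult_left cross_mult_right)
  then show "a = a'" and "c = c'" using assms(1) by simp_all
qed

lemma mink_gauss_curv_eq_eigenvalue_product:
  assumes "cross3 (partial_s f p) (partial_v f p) \<noteq> 0"
    and "partial_s (BG_map m f) p = k1 *\<^sub>R partial_s f p"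
    and "partial_v (BG_map m f) p = k2 *\<^sub>R partial_v f p"
  shows "mink_gauss_curv m f p = k1 * k2"
  unfolding mink_gauss_curv_def
proof (rule the_equality)
  show "\<exists>a b c d. partial_s (BG_map m f) p = a *\<^sub>R partial_s f p + c *\<^sub>R partial_v f p \<and>
      partial_v (BG_map m f) p = b *\<^sub>R partial_s f p + d *\<^sub>R partial_v f p \<and> k1 * k2 = a * d - b * c"
    using assms(2,3) by (intro exI[of _ k1] exI[of _ 0] exI[of _ 0] exI[of _ k2]) simp
next
  fix k
  assume "\<exists>a b c d. partial_s (BG_map m f) p = a *\<^sub>R partial_s f p + c *\<^sub>R partial_v f p \<and>
      partial_v (BG_map m f) p = b *\<^sub>R partial_s f p + d *\<^sub>R partial_v f p \<and> k = a * d - b * c"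
  then obtain a b c d where
    "k1 *\<^sub>R partial_s f p + 0 *\<^sub>R partial_v f p = a *\<^sub>R partial_s f p + c *\<^sub>R partial_v f p"
    "0 *\<^sub>R partial_s f p + k2 *\<^sub>R partial_v f p = b *\<^sub>R partial_s f p + d *\<^sub>R partial_v f p"
    and "k = a * d - b * c"
    using assms(2,3) by auto
  with cross3_ne_0_imp_coeffs_unique[OF assms(1)] show "k = k1 * k2" by (metis mult_zero_left diff_zero)
qed

lemma Phi_scaleR: "Phi m (t *\<^sub>R x) = t ^ (2*m) * Phi m x"
proof -
  have "t^2 * (x$1)^2 + t^2 * (x$2)^2 = t^2 * ((x$1)^2 + (x$2)^2)"
    by (simp add: algebra_simps)
  then show ?thesis
    by (simp add: Phi_def power_mult_distrib power_mult) (simp add: distrib_left)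
qed

lemma gradPhi_scaleR:
  assumes "m \<ge> 1"
  shows "gradPhi m (t *\<^sub>R x) = t ^ (2*m - 1) *\<^sub>R gradPhi m x"
proof -
  obtain k where k: "m = Suc k" using assms by (cases m) auto
  have sq: "t^2 * (x$1)^2 + t^2 * (x$2)^2 = t^2 * ((x$1)^2 + (x$2)^2)"
    by (simp add: algebra_simps)
  have "t ^ (2*m - 1) = t * (t^2)^k" "2*m - 1 = Suc (2*k)" using k by (simp_all add: power_mult)
  then show ?thesis using k
    by (simp add: gradPhi_def vec_eq_iff forall_3 sq power_mult_distrib power_mult)
qed

text \<open>The Euclidean normal of rot_surface at (u, v) is alpha(u) meridian_vec v (alpha'(u)).\<close>

definition meridian_vec :: "real \<Rightarrow> real \<Rightarrow> real^3" where
  "meridian_vec v z = vector [- cos v, - sin v, z]"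

lemma meridian_vec_nonzero: "meridian_vec v z \<noteq> 0"
proof
  assume "meridian_vec v z = 0"
  then have "cos v = 0" and "sin v = 0"
    by (simp_all add: meridian_vec_def vec_eq_iff forall_3)
  then show False using sin_cos_squared_add[of v] by simp
qed

lemma Phi_meridian_vec: "Phi m (meridian_vec v z) = 1 + z ^ (2*m)"
  by (simp add: Phi_def meridian_vec_def power_mult)

lemma gradPhi_meridian_vec:
  "gradPhi m (meridian_vec v z) = (2 * real m) *\<^sub>R meridian_vec v (z ^ (2*m - 1))"
  by (simp add: gradPhi_def meridian_vec_def vec_eq_iff forall_3)

lemma gradPhi_eq_meridian_vec_imp_ray:
  assumes m: "m \<ge> 1" and "\<mu> > 0"
    and grad: "gradPhi m e = \<mu> *\<^sub>R meridian_vec v (z ^ (2*m - 1))"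
  obtains t where "t > 0" and "e = t *\<^sub>R meridian_vec v z"
proof -
  obtain k where k: "m = Suc k" using m by (cases m) auto
  have odd_exp: "2*m - 1 = 2*k + 1" using k by simp
  define s where "s = (e$1)^2 + (e$2)^2"
  define c where "c = \<mu> / (2 * real m)"
  have c: "c > 0" unfolding c_def using \<open>\<mu> > 0\<close> m by simp
  have g1: "e$1 * s^k = - c * cos v" and g2: "e$2 * s^k = - c * sin v"
    and g3: "(e$3)^(2*k+1) = c * z^(2*k+1)"
  proof -
    have "2 * real m * (e$1 * s^k) = \<mu> * - cos v" "2 * real m * (e$2 * s^k) = \<mu> * - sin v"
      "2 * real m * (e$3)^(2*k+1) = \<mu> * z^(2*k+1)"
      using grad k by (simp_all add: gradPhi_def meridian_vec_def vec_eq_iff forall_3 s_def odd_exp mult.assoc)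
    then show "e$1 * s^k = - c * cos v" "e$2 * s^k = - c * sin v" "(e$3)^(2*k+1) = c * z^(2*k+1)"
      using m unfolding c_def by (simp_all add: field_simps)
  qed
  \<comment> \<open>The horizontal part of e has squared length s with s^(2k+1) = c^2, which fixes s;
    the vertical component is then recovered from an odd power.\<close>
  have "s^(2*k+1) = (e$1 * s^k)^2 + (e$2 * s^k)^2"
    unfolding s_def by (simp add: power_mult_distrib power_add power_mult algebra_simps)
  also have "\<dots> = c^2" unfolding g1 g2 by (simp add: power_mult_distrib flip: distrib_left)
  finally have sc: "s^(2*k+1) = c^2" .
  have "s > 0"
  proof -
    have "s \<noteq> 0" using sc c by auto
    then show ?thesis unfolding s_def by (simp add: order_le_neq_trans)
  qed
  define t where "t = sqrt s"
  have t: "t > 0" "t^2 = s" unfolding t_def using \<open>s > 0\<close> by auto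
  have tc: "t^(2*k+1) = c"
  proof (rule power_eq_imp_eq_base[of _ 2])
    have "(t^(2*k+1))^2 = (t^2)^(2*k+1)" by (simp only: power_mult[symmetric] mult.commute)
    then show "(t^(2*k+1))^2 = c^2" using sc t by simp
  qed (use t c in auto)
  have tk: "t^(2*k) > 0" and sk: "s^k = t^(2*k)" using t by (auto simp: power_mult)
  have "e$1 * t^(2*k) = (- t * cos v) * t^(2*k)" "e$2 * t^(2*k) = (- t * sin v) * t^(2*k)"
    using g1 g2 unfolding sk tc[symmetric] by (simp_all add: algebra_simps)
  then have "e$1 = - t * cos v" "e$2 = - t * sin v"
    using tk by (metis less_irrefl mult_right_cancel)+
  moreover have "e$3 = t * z"
  proof -
    have "(e$3)^(2*k+1) = (t*z)^(2*k+1)" unfolding power_mult_distrib g3 tc ..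
    moreover have "odd (2*k+1)" by simp
    ultimately show ?thesis by (metis odd_real_root_power_cancel)
  qed
  ultimately show ?thesis
    using that t by (simp add: meridian_vec_def vec_eq_iff forall_3)
qed

text \<open>The point of the unit sphere S of Phi on the ray through meridian_vec v z.\<close>

definition unit_meridian_vec :: "nat \<Rightarrow> real \<Rightarrow> real \<Rightarrow> real^3" where
  "unit_meridian_vec m v z = (1 + z ^ (2*m)) powr (-1 / (2 * real m)) *\<^sub>R meridian_vec v z"

lemma Phi_level_point_with_normal_meridian_vec:
  fixes a z :: real
  assumes m: "m \<ge> 1" and "a > 0"
  shows "(THE e. Phi m e = 1 \<and> (\<exists>\<mu>>0. gradPhi m e = \<mu> *\<^sub>R (a *\<^sub>R meridian_vec v (z ^ (2*m - 1)))))
    = unit_meridian_vec m v z"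
proof -
  define q where "q = 1 + z ^ (2*m)"
  define \<rho> where "\<rho> = q powr (-1 / (2 * real m))"
  have "q > 0" unfolding q_def by (simp add: add_pos_nonneg zero_le_even_power)
  then have "\<rho> > 0" unfolding \<rho>_def by simp
  have "\<rho> ^ (2*m) = q powr (real (2*m) * (-1 / (2*m)))"
    unfolding \<rho>_def using \<open>q > 0\<close> by (simp add: powr_power)
  then have \<rho>q: "\<rho> ^ (2*m) * q = 1" using m \<open>q > 0\<close> by (simp add: powr_minus)
  show ?thesis
    unfolding unit_meridian_vec_def \<rho>_def[unfolded q_def, symmetric]
  proof (rule the_equality, intro conjI)
    show "Phi m (\<rho> *\<^sub>R meridian_vec v z) = 1"
      using \<rho>q by (simp add: Phi_scaleR Phi_meridian_vec q_def)
    have "gradPhi m (\<rho> *\<^sub>R meridian_vec v z)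
        = (\<rho> ^ (2*m - 1) * (2 * real m) / a) *\<^sub>R (a *\<^sub>R meridian_vec v (z ^ (2*m - 1)))"
      using m \<open>a > 0\<close> by (simp add: gradPhi_scaleR gradPhi_meridian_vec)
    moreover have "\<rho> ^ (2*m - 1) * (2 * real m) / a > 0" using \<open>\<rho> > 0\<close> \<open>a > 0\<close> m by simp
    ultimately show "\<exists>\<mu>>0. gradPhi m (\<rho> *\<^sub>R meridian_vec v z)
        = \<mu> *\<^sub>R (a *\<^sub>R meridian_vec v (z ^ (2*m - 1)))" by blast
  next
    fix e
    assume "Phi m e = 1 \<and> (\<exists>\<mu>>0. gradPhi m e = \<mu> *\<^sub>R (a *\<^sub>R meridian_vec v (z ^ (2*m - 1))))"
    then obtain \<mu> where Phi_e: "Phi m e = 1" and "\<mu> > 0"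
      and "gradPhi m e = (\<mu> * a) *\<^sub>R meridian_vec v (z ^ (2*m - 1))" by auto
    moreover have "\<mu> * a > 0" using \<open>\<mu> > 0\<close> \<open>a > 0\<close> by simp
    ultimately obtain t where "t > 0" and e: "e = t *\<^sub>R meridian_vec v z"
      using gradPhi_eq_meridian_vec_imp_ray m by blast
    have "t ^ (2*m) * q = \<rho> ^ (2*m) * q"
      using Phi_e \<rho>q by (simp add: e Phi_scaleR Phi_meridian_vec q_def)
    then have "t ^ (2*m) = \<rho> ^ (2*m)" using \<open>q > 0\<close> by simp
    then show "e = \<rho> *\<^sub>R meridian_vec v z"
      using \<open>t > 0\<close> \<open>\<rho> > 0\<close> m e by (simp add: power_eq_iff_eq_base)
  qed
qed

lemma has_vector_derivative_unit_meridian_vec: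
  assumes m: "m \<ge> 1"
  shows "(unit_meridian_vec m v has_vector_derivative
      (1 + z ^ (2*m)) powr (-1 / (2 * real m) - 1) *\<^sub>R
        vector [z ^ (2*m - 1) * cos v, z ^ (2*m - 1) * sin v, 1]) (at z)"
proof -
  define q where "q = 1 + z ^ (2*m)"
  define P where "P = q powr (-1 / (2 * real m) - 1)"
  have "q > 0" unfolding q_def by (simp add: add_pos_nonneg zero_le_even_power)
  have zz: "z ^ (2*m - 1) * z = z ^ (2*m)"
    using m by (simp flip: power_Suc2)
  have "((\<lambda>z. (1 + z ^ (2*m)) powr (-1 / (2 * real m))) has_real_derivative
      (-1 / (2 * real m)) * q powr (-1 / (2 * real m) - 1) * (real (2*m) * z ^ (2*m - 1))) (at z)"
    using \<open>q > 0\<close> unfolding q_def by (auto intro!: derivative_eq_intros)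
  then have d\<rho>: "((\<lambda>z. (1 + z ^ (2*m)) powr (-1 / (2 * real m))) has_real_derivative
      - P * z ^ (2*m - 1)) (at z)"
    using m unfolding P_def by (simp add: field_simps)
  have "q powr (-1 / (2 * real m)) = P * q"
    unfolding P_def using \<open>q > 0\<close> by (simp add: powr_add[symmetric] powr_diff)
  then have "(1 + z ^ (2*m)) powr (-1 / (2 * real m)) *\<^sub>R (vector [0, 0, 1] :: real^3)
      + (- P * z ^ (2*m - 1)) *\<^sub>R vector [- cos v, - sin v, z]
      = P *\<^sub>R vector [z ^ (2*m - 1) * cos v, z ^ (2*m - 1) * sin v, 1]"
    unfolding q_def by (simp add: vec_eq_iff forall_3 algebra_simps) (metis zz mult.commute One_nat_def)
  then have "((\<lambda>z. (1 + z ^ (2*m)) powr (-1 / (2 * real m)) *\<^sub>R meridian_vec v z) has_vector_derivative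
      P *\<^sub>R vector [z ^ (2*m - 1) * cos v, z ^ (2*m - 1) * sin v, 1]) (at z)"
    unfolding meridian_vec_def
    using has_vector_derivative_scaleR[OF d\<rho>
        has_vector_derivative_vector3[OF DERIV_const[of "- cos v"] DERIV_const[of "- sin v"] DERIV_ident]]
    by simp
  then show ?thesis unfolding unit_meridian_vec_def P_def q_def .
qed

lemma partial_s_rot_surface:
  assumes "(\<alpha> has_real_derivative A) (at u)"
  shows "partial_s (rot_surface \<alpha>) (u, v) = vector [A * cos v, A * sin v, 1]"
  unfolding partial_s_def rot_surface_def
  by (auto intro!: vector_derivative_at has_vector_derivative_vector3 derivative_eq_intros assms)

lemma partial_v_rot_surface:
  "partial_v (rot_surface \<alpha>) (u, v) = vector [- \<alpha> u * sin v, \<alpha> u * cos v, 0]"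
  unfolding partial_v_def rot_surface_def
  by (auto intro!: vector_derivative_at has_vector_derivative_vector3 derivative_eq_intros)

lemma cross3_partials_rot_surface:
  "cross3 (vector [A * cos v, A * sin v, 1]) (vector [- a * sin v, a * cos v, 0])
    = a *\<^sub>R meridian_vec v A"
proof -
  have "A * (a * (cos v)\<^sup>2) + A * (a * (sin v)\<^sup>2) = a * A" by (simp flip: distrib_left)
  then show ?thesis
    by (simp add: cross3_def meridian_vec_def vec_eq_iff forall_3 algebra_simps power2_eq_square[symmetric])
qed

lemma BG_map_rot_surface:
  assumes "m \<ge> 1" and "\<alpha> u > 0" and "(\<alpha> has_real_derivative A) (at u)"
  shows "BG_map m (rot_surface \<alpha>) (u, v) = unit_meridian_vec m v (root (2*m - 1) A)"
proof -
  have "odd (2*m - 1)" using assms(1) by simp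
  then have A: "root (2*m - 1) A ^ (2*m - 1) = A" by (rule odd_real_root_pow)
  show ?thesis
    unfolding BG_map_def partial_s_rot_surface[OF assms(3)] partial_v_rot_surface
      cross3_partials_rot_surface
    using Phi_level_point_with_normal_meridian_vec[OF assms(1,2), of v "root (2*m - 1) A"]
    unfolding A .
qed

lemma DERIV_odd_root_comp:
  assumes "odd n" and "f x \<noteq> 0" and "(f has_real_derivative D) (at x)"
  shows "\<exists>c>0. ((\<lambda>y. root n (f y)) has_real_derivative c * D) (at x)"
proof -
  have "n > 0" using \<open>odd n\<close> by (rule odd_pos)
  then have "root n (f x) ^ (n - 1) > 0"
    using \<open>odd n\<close> \<open>f x \<noteq> 0\<close> by (simp add: zero_less_power_eq)
  then have "inverse (real n * root n (f x) ^ (n - 1)) > 0" using \<open>n > 0\<close> by simp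
  moreover have "((\<lambda>y. root n (f y)) has_real_derivative
      inverse (real n * root n (f x) ^ (n - 1)) * D) (at x)"
    using DERIV_chain2[OF DERIV_odd_real_root[OF assms(1,2)] assms(3)] by simp
  ultimately show ?thesis by blast
qed

lemma partial_s_BG_map_rot_surface:
  assumes m: "m \<ge> 1" and "open I" and "u \<in> I"
    and pos: "\<forall>x\<in>I. \<alpha> x > 0" and d1: "\<forall>x\<in>I. (\<alpha> has_real_derivative \<alpha>' x) (at x)"
    and "\<alpha>' u \<noteq> 0" and d2: "(\<alpha>' has_real_derivative A2) (at u)"
  shows "\<exists>c>0. partial_s (BG_map m (rot_surface \<alpha>)) (u, v)
    = (c * A2) *\<^sub>R partial_s (rot_surface \<alpha>) (u, v)"
proof -
  define n where "n = 2*m - 1"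
  have "odd n" using m unfolding n_def by simp
  define w where "w x = root n (\<alpha>' x)" for x
  obtain c0 where "c0 > 0" and dw: "(w has_real_derivative c0 * A2) (at u)"
    unfolding w_def using DERIV_odd_root_comp[OF \<open>odd n\<close> \<open>\<alpha>' u \<noteq> 0\<close> d2] by blast
  define P where "P = (1 + w u ^ (2*m)) powr (-1 / (2 * real m) - 1)"
  have "1 + w u ^ (2*m) > 0" by (simp add: add_pos_nonneg zero_le_even_power)
  then have "P * c0 > 0" unfolding P_def using \<open>c0 > 0\<close> by simp
  have "((unit_meridian_vec m v \<circ> w) has_vector_derivative
      (c0 * A2) *\<^sub>R (P *\<^sub>R vector [w u ^ n * cos v, w u ^ n * sin v, 1])) (at u)"
    unfolding P_def n_def
    using vector_diff_chain_at[OF dw[unfolded has_real_derivative_iff_has_vector_derivative]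
        has_vector_derivative_unit_meridian_vec[OF m]] .
  moreover have "w u ^ n = \<alpha>' u" unfolding w_def using \<open>odd n\<close> by (rule odd_real_root_pow)
  moreover have "partial_s (rot_surface \<alpha>) (u, v) = vector [\<alpha>' u * cos v, \<alpha>' u * sin v, 1]"
    using d1 \<open>u \<in> I\<close> partial_s_rot_surface by blast
  ultimately have dcomp: "((unit_meridian_vec m v \<circ> w) has_vector_derivative
      ((P * c0) * A2) *\<^sub>R partial_s (rot_surface \<alpha>) (u, v)) (at u)"
    by (simp add: mult_ac)
  have agree: "(unit_meridian_vec m v \<circ> w) x = BG_map m (rot_surface \<alpha>) (x, v)" if "x \<in> I" for x
    using BG_map_rot_surface[OF m, of \<alpha> x "\<alpha>' x" v] pos d1 that by (simp add: w_def n_def)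
  have "((\<lambda>x. BG_map m (rot_surface \<alpha>) (x, v)) has_vector_derivative
      ((P * c0) * A2) *\<^sub>R partial_s (rot_surface \<alpha>) (u, v)) (at u)"
    using has_vector_derivative_transform_within_open[OF dcomp \<open>open I\<close> \<open>u \<in> I\<close> agree] .
  then have "partial_s (BG_map m (rot_surface \<alpha>)) (u, v)
      = ((P * c0) * A2) *\<^sub>R partial_s (rot_surface \<alpha>) (u, v)"
    unfolding partial_s_def[of "BG_map m (rot_surface \<alpha>)"] fst_conv snd_conv
    by (rule vector_derivative_at)
  with \<open>P * c0 > 0\<close> show ?thesis by blast
qed

lemma partial_v_BG_map_rot_surface:
  assumes "m \<ge> 1" and "\<alpha> u > 0" and "(\<alpha> has_real_derivative A) (at u)"
  shows "\<exists>c>0. partial_v (BG_map m (rot_surface \<alpha>)) (u, v)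
    = - c *\<^sub>R partial_v (rot_surface \<alpha>) (u, v)"
proof -
  define z where "z = root (2*m - 1) A"
  define \<rho> where "\<rho> = (1 + z ^ (2*m)) powr (-1 / (2 * real m))"
  have "1 + z ^ (2*m) > 0" by (simp add: add_pos_nonneg zero_le_even_power)
  then have "\<rho> / \<alpha> u > 0" unfolding \<rho>_def using assms(2) by simp
  have "BG_map m (rot_surface \<alpha>) (u, v') = vector [- \<rho> * cos v', - \<rho> * sin v', \<rho> * z]" for v'
    unfolding BG_map_rot_surface[OF assms] unit_meridian_vec_def z_def[symmetric] \<rho>_def[symmetric]
    by (simp add: meridian_vec_def vec_eq_iff forall_3)
  then have "((\<lambda>v'. BG_map m (rot_surface \<alpha>) (u, v')) has_vector_derivative
      vector [\<rho> * sin v, - \<rho> * cos v, 0]) (at v)"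
    by (auto intro!: has_vector_derivative_vector3 derivative_eq_intros)
  then have "partial_v (BG_map m (rot_surface \<alpha>)) (u, v) = vector [\<rho> * sin v, - \<rho> * cos v, 0]"
    unfolding partial_v_def[of "BG_map m (rot_surface \<alpha>)"] fst_conv snd_conv
    by (rule vector_derivative_at)
  also have "\<dots> = - (\<rho> / \<alpha> u) *\<^sub>R partial_v (rot_surface \<alpha>) (u, v)"
    using assms(2) by (simp add: partial_v_rot_surface vec_eq_iff forall_3)
  finally show ?thesis using \<open>\<rho> / \<alpha> u > 0\<close> by blast
qed

lemma mink_gauss_curv_rot_surface_eq_0_iff:
  assumes m: "m \<ge> 1" and "open I" and "u \<in> I"
    and pos: "\<forall>x\<in>I. \<alpha> x > 0" and d1: "\<forall>x\<in>I. (\<alpha> has_real_derivative \<alpha>' x) (at x)"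
    and "\<alpha>' u \<noteq> 0" and d2: "(\<alpha>' has_real_derivative A2) (at u)"
  shows "mink_gauss_curv m (rot_surface \<alpha>) (u, v) = 0 \<longleftrightarrow> A2 = 0"
proof -
  have "\<alpha> u > 0" and du: "(\<alpha> has_real_derivative \<alpha>' u) (at u)" using pos d1 \<open>u \<in> I\<close> by auto
  obtain c1 where "c1 > 0" and ds: "partial_s (BG_map m (rot_surface \<alpha>)) (u, v)
      = (c1 * A2) *\<^sub>R partial_s (rot_surface \<alpha>) (u, v)"
    using partial_s_BG_map_rot_surface[OF assms] by blast
  obtain c2 where "c2 > 0" and dv: "partial_v (BG_map m (rot_surface \<alpha>)) (u, v)
      = - c2 *\<^sub>R partial_v (rot_surface \<alpha>) (u, v)"
    using partial_v_BG_map_rot_surface[OF m \<open>\<alpha> u > 0\<close> du] by blast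
  have "cross3 (partial_s (rot_surface \<alpha>) (u, v)) (partial_v (rot_surface \<alpha>) (u, v)) \<noteq> 0"
    unfolding partial_s_rot_surface[OF du] partial_v_rot_surface cross3_partials_rot_surface
    using \<open>\<alpha> u > 0\<close> meridian_vec_nonzero by simp
  then have "mink_gauss_curv m (rot_surface \<alpha>) (u, v) = (c1 * A2) * (- c2)"
    using mink_gauss_curv_eq_eigenvalue_product ds dv by blast
  then show ?thesis using \<open>c1 > 0\<close> \<open>c2 > 0\<close> by simp
qed

lemma DERIV_affine_on_open:
  assumes "open I" and "x \<in> I" and "\<forall>y\<in>I. f y = a * y + b"
    and "(f has_real_derivative D) (at x)"
  shows "D = a"
proof -
  have "((\<lambda>y. a * y + b) has_real_derivative a) (at x)" by (auto intro!: derivative_eq_intros)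
  then have "(f has_real_derivative a) (at x)"
    using has_field_derivative_transform_within_open[OF _ assms(1,2)] assms(3) by force
  then show ?thesis using assms(4) DERIV_unique by blast
qed

lemma second_derivative_eq_0_iff_affine:
  fixes f f' f'' :: "real \<Rightarrow> real"
  assumes "open I" and "is_interval I"
    and d1: "\<forall>x\<in>I. (f has_real_derivative f' x) (at x)"
    and d2: "\<forall>x\<in>I. (f' has_real_derivative f'' x) (at x)"
  shows "(\<forall>x\<in>I. f'' x = 0) \<longleftrightarrow> (\<exists>a b. \<forall>x\<in>I. f x = a * x + b)"
proof
  assume "\<forall>x\<in>I. f'' x = 0"
  have "convex I" using \<open>is_interval I\<close> by (rule is_interval_convex)
  then obtain a where a: "\<forall>x\<in>I. f' x = a"
    using has_field_derivative_zero_constant[of I f'] d2 \<open>\<forall>x\<in>I. f'' x = 0\<close>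
    by (metis has_field_derivative_at_within)
  have "((\<lambda>x. f x - a * x) has_real_derivative 0) (at x within I)" if "x \<in> I" for x
    using DERIV_diff[OF bspec[OF d1 that] DERIV_cmult[OF DERIV_ident, of a]] a that
    by (simp add: has_field_derivative_at_within)
  then obtain b where "\<forall>x\<in>I. f x - a * x = b"
    using has_field_derivative_zero_constant[OF \<open>convex I\<close>, of "\<lambda>x. f x - a * x"] by blast
  then show "\<exists>a b. \<forall>x\<in>I. f x = a * x + b" by (metis diff_eq_eq add.commute)
next
  assume "\<exists>a b. \<forall>x\<in>I. f x = a * x + b"
  then obtain a b where ab: "\<forall>x\<in>I. f x = a * x + b" by blast
  have f': "\<forall>x\<in>I. f' x = 0 * x + a"
    using DERIV_affine_on_open[OF \<open>open I\<close> _ ab] d1 by simp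
  show "\<forall>x\<in>I. f'' x = 0"
    using DERIV_affine_on_open[OF \<open>open I\<close> _ f'] d2 by blast
qed

theorem proposition3p1:
  fixes m :: nat and I :: "real set" and \<alpha> :: "real \<Rightarrow> real"
  assumes "m \<ge> 2"
    and "open I" and "is_interval I" and "I \<noteq> {}"
    and "smooth_on I \<alpha>"
    and "\<forall>u\<in>I. \<alpha> u > 0"
    and "\<forall>u\<in>I. deriv \<alpha> u \<noteq> 0"
  shows "(\<forall>u\<in>I. \<forall>v. mink_gauss_curv m (rot_surface \<alpha>) (u, v) = 0) \<longleftrightarrow>
         (\<exists>a b. a \<noteq> 0 \<and> (\<forall>u\<in>I. \<alpha> u = a * u + b))"
proof -
  obtain D where "D 0 = \<alpha>" and D: "\<forall>n. \<forall>x\<in>I. (D n has_real_derivative D (Suc n) x) (at x)"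
    using \<open>smooth_on I \<alpha>\<close> unfolding smooth_on_def by blast
  then have d1: "\<forall>x\<in>I. (\<alpha> has_real_derivative D 1 x) (at x)"
    and d2: "\<forall>x\<in>I. (D 1 has_real_derivative D 2 x) (at x)"
    by (metis One_nat_def, metis Suc_1)
  have nz: "D 1 x \<noteq> 0" if "x \<in> I" for x
    using assms(7) d1 that DERIV_imp_deriv by metis
  have "(\<forall>u\<in>I. \<forall>v. mink_gauss_curv m (rot_surface \<alpha>) (u, v) = 0) \<longleftrightarrow> (\<forall>u\<in>I. D 2 u = 0)"
    using mink_gauss_curv_rot_surface_eq_0_iff[of m I _ \<alpha> "D 1"] assms(1,2,6) d1 d2 nz by auto
  also have "\<dots> \<longleftrightarrow> (\<exists>a b. \<forall>u\<in>I. \<alpha> u = a * u + b)"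
    using second_derivative_eq_0_iff_affine[OF assms(2,3) d1 d2] .
  also have "\<dots> \<longleftrightarrow> (\<exists>a b. a \<noteq> 0 \<and> (\<forall>u\<in>I. \<alpha> u = a * u + b))"
  proof -
    obtain u0 where "u0 \<in> I" using \<open>I \<noteq> {}\<close> by blast
    have "a \<noteq> 0" if "\<forall>u\<in>I. \<alpha> u = a * u + b" for a b
      using DERIV_affine_on_open[OF \<open>open I\<close> \<open>u0 \<in> I\<close> that] d1 nz[OF \<open>u0 \<in> I\<close>] \<open>u0 \<in> I\<close>
      by blast
    then show ?thesis by blast
  qed
  finally show ?thesis .
qed

end
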